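(* Let $N\ge 3$, $1\le p\le\infty$, $\alpha\in\mathbb{R}$ and $\beta=2-\alpha+N(1-\frac2p)$. The inequality $\||x|^\alpha\Delta u\|_p\ge C\||x|^{\alpha-2}u\|_p$ holds for all $u\in C_c^\infty(\mathbb{R}^N\setminus\{0\})$ with some $C>0$ if and only if $\||x|^\beta\Delta u\|_p\ge C\||x|^{\beta-2}u\|_p$ holds for all $u\in C_c^\infty(\mathbb{R}^N\setminus\{0\})$ with some $C>0$. Moreover, the best constants in the two inequalities coincide.
   Context: Norms are $L^p(\mathbb{R}^N)$ norms (sup norm for $p=\infty$); the best constant is the largest $C\ge0$ for which the inequality holds for all such $u$. *)

theory Defs
  imports "HOL-Analysis.Analysis"
begin

definition partial :: "'n::finite \<Rightarrow> (real^'n \<Rightarrow> real) \<Rightarrow> real^'n \<Rightarrow> real" where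
  "partial i f x = deriv (\<lambda>t. f (x + t *\<^sub>R axis i 1)) 0"

fun iter_partial :: "'n::finite list \<Rightarrow> (real^'n \<Rightarrow> real) \<Rightarrow> real^'n \<Rightarrow> real" where
  "iter_partial [] f = f"
| "iter_partial (i # is) f = partial i (iter_partial is f)"

definition smooth :: "(real^'n::finite \<Rightarrow> real) \<Rightarrow> bool" where
  "smooth f \<longleftrightarrow> (\<forall>is x. iter_partial is f differentiable (at x))"

definition tsupport :: "(real^'n::finite \<Rightarrow> real) \<Rightarrow> (real^'n) set" where
  "tsupport f = closure {x. f x \<noteq> 0}"

definition test_fun :: "(real^'n::finite \<Rightarrow> real) \<Rightarrow> bool" where
  "test_fun u \<longleftrightarrow> smooth u \<and> compact (tsupport u) \<and> 0 \<notin> tsupport u"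

definition laplacian :: "(real^'n::finite \<Rightarrow> real) \<Rightarrow> real^'n \<Rightarrow> real" where
  "laplacian u x = (\<Sum>i\<in>UNIV. partial i (partial i u) x)"

definition Lp_norm :: "ereal \<Rightarrow> (real^'n::finite \<Rightarrow> real) \<Rightarrow> real" where
  "Lp_norm p f = (if p = \<infinity> then (SUP x. \<bar>f x\<bar>)
     else (LINT x|lborel. \<bar>f x\<bar> powr real_of_ereal p) powr (1 / real_of_ereal p))"

definition rellich_ineq :: "'n::finite itself \<Rightarrow> ereal \<Rightarrow> real \<Rightarrow> real \<Rightarrow> bool" where
  "rellich_ineq _ p a C \<longleftrightarrow> (\<forall>u::real^'n \<Rightarrow> real. test_fun u \<longrightarrow>
      Lp_norm p (\<lambda>x. norm x powr a * laplacian u x) \<ge> C * Lp_norm p (\<lambda>x. norm x powr (a - 2) * u x))"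

definition best_const :: "'n::finite itself \<Rightarrow> ereal \<Rightarrow> real \<Rightarrow> real" where
  "best_const n p a = Sup {C. C \<ge> 0 \<and> rellich_ineq n p a C}"

end

theory Submission
  imports Defs
begin

text \<open>
  The Kelvin transform \<open>K u x = \<bar>x\<bar>\<^sup>2\<^sup>-\<^sup>N u (x / \<bar>x\<bar>\<^sup>2)\<close> is an involution of
  \<open>C\<^sub>c\<^sup>\<infinity>(\<real>\<^sup>N - {0})\<close> and satisfies \<open>\<Delta> (K u) x = \<bar>x\<bar>\<^sup>-\<^sup>2\<^sup>-\<^sup>N (\<Delta> u) (x / \<bar>x\<bar>\<^sup>2)\<close>.
  The inversion \<open>x \<mapsto> x / \<bar>x\<bar>\<^sup>2\<close> has Jacobian determinant of modulus \<open>\<bar>x\<bar>\<^sup>-\<^sup>2\<^sup>N\<close>, so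
  for \<open>v = K u\<close> both weighted norms with exponent \<open>\<beta>\<close> equal the corresponding norms of
  \<open>u\<close> with exponent \<open>\<alpha>\<close>: the weights are exactly compensated when
  \<open>\<beta> = 2 - \<alpha> + N (1 - 2/p)\<close>. Hence the two inequalities hold for precisely the same
  constants, and the relation between \<open>\<alpha>\<close> and \<open>\<beta>\<close> is symmetric. The argument works in
  every dimension.
\<close>

text \<open>The change-of-variables theorems of HOL-Analysis require a well-ordered index type;
  we transport Lebesgue measure along a copy of the coordinate type carrying such an order.\<close>

typedef 'a wellordered = "UNIV :: 'a set" by auto

instantiation wellordered :: (finite) linorder
begin
definition less_eq_wellordered :: "'a wellordered \<Rightarrow> 'a wellordered \<Rightarrow> bool" where
  "less_eq_wellordered a b \<longleftrightarrow> to_nat (Rep_wellordered a) \<le> to_nat (Rep_wellordered b)"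
definition less_wellordered :: "'a wellordered \<Rightarrow> 'a wellordered \<Rightarrow> bool" where
  "less_wellordered a b \<longleftrightarrow> to_nat (Rep_wellordered a) < to_nat (Rep_wellordered b)"
instance
  by standard (auto simp: less_eq_wellordered_def less_wellordered_def Rep_wellordered_inject)
end

lemma Rep_Abs_wellordered [simp]: "Rep_wellordered (Abs_wellordered i) = i"
  by (simp add: Abs_wellordered_inverse)

lemma bij_Abs_wellordered: "bij Abs_wellordered"
  by (metis Abs_wellordered_inverse Rep_wellordered_inverse UNIV_I bij_betw_byWitness subsetI)

instance wellordered :: (finite) finite
  by standard (metis bij_Abs_wellordered bij_betw_def finite finite_imageI)

instance wellordered :: (finite) wellorder
proof
  fix P :: "'a wellordered \<Rightarrow> bool" and a :: "'a wellordered"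
  assume step: "\<And>x. (\<And>y. y < x \<Longrightarrow> P y) \<Longrightarrow> P x"
  have "\<forall>x. to_nat (Rep_wellordered x) = n \<longrightarrow> P x" for n
    by (induction n rule: less_induct) (use step in \<open>auto simp: less_wellordered_def\<close>)
  then show "P a" by blast
qed

lemma card_wellordered: "CARD('a wellordered) = CARD('a)"
  using bij_Abs_wellordered bij_betw_same_card by metis

definition to_wellordered :: "real^'n \<Rightarrow> real^('n wellordered)" where
  "to_wellordered x = (\<chi> j. x $ Rep_wellordered j)"

definition of_wellordered :: "real^('n wellordered) \<Rightarrow> real^'n" where
  "of_wellordered y = (\<chi> i. y $ Abs_wellordered i)"

lemma of_to_wellordered [simp]: "of_wellordered (to_wellordered x) = x"
  by (simp add: of_wellordered_def to_wellordered_def Abs_wellordered_inverse vec_eq_iff)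

lemma linear_to_wellordered: "linear to_wellordered"
  by (auto simp: linear_iff to_wellordered_def vec_eq_iff)

lemma linear_of_wellordered: "linear of_wellordered"
  by (auto simp: linear_iff of_wellordered_def vec_eq_iff)

lemma borel_measurable_to_wellordered [measurable]: "to_wellordered \<in> borel_measurable borel"
  by (intro borel_measurable_continuous_onI linear_continuous_on
      linear_to_wellordered[unfolded linear_conv_bounded_linear])

lemma borel_measurable_of_wellordered [measurable]: "of_wellordered \<in> borel_measurable borel"
  by (intro borel_measurable_continuous_onI linear_continuous_on
      linear_of_wellordered[unfolded linear_conv_bounded_linear])

lemma norm_of_wellordered: "norm (of_wellordered y) = norm y"
proof -
  have "(\<Sum>i\<in>UNIV. (y $ Abs_wellordered i)\<^sup>2) = (\<Sum>j\<in>UNIV. (y $ j)\<^sup>2)"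
    using bij_Abs_wellordered by (rule sum.reindex_bij_betw)
  then show ?thesis by (simp add: norm_vec_def L2_set_def of_wellordered_def)
qed

lemma of_wellordered_scaleR: "of_wellordered (c *\<^sub>R y) = c *\<^sub>R of_wellordered y"
  by (simp add: of_wellordered_def vec_eq_iff)

lemma prod_Basis_vec: "(\<Prod>b\<in>Basis. (v::real^'n) \<bullet> b) = (\<Prod>i\<in>UNIV. v $ i)"
  by (simp add: Basis_vec_def cart_eq_inner_axis axis_eq_axis prod.UNION_disjoint)

lemma distr_lborel_to_wellordered: "distr lborel borel (to_wellordered :: real^'n \<Rightarrow> _) = lborel"
proof (rule lborel_eqI[symmetric])
  fix l u :: "real^('n wellordered)"
  assume le: "\<And>b. b \<in> Basis \<Longrightarrow> l \<bullet> b \<le> u \<bullet> b"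
  have box: "to_wellordered -` box l u = box (of_wellordered l) (of_wellordered u)"
    by (auto simp: mem_box_cart to_wellordered_def of_wellordered_def)
      (metis Rep_Abs_wellordered Rep_wellordered_inverse)+
  have "l $ i \<le> u $ i" for i
    using le[of "axis i 1"] by (auto simp: Basis_vec_def inner_axis)
  then have "\<And>b. b \<in> Basis \<Longrightarrow> of_wellordered l \<bullet> b \<le> of_wellordered u \<bullet> b"
    by (auto simp: Basis_vec_def inner_axis of_wellordered_def)
  then have "emeasure (distr lborel borel to_wellordered) (box l u)
      = (\<Prod>b\<in>Basis. (of_wellordered u - of_wellordered l) \<bullet> b)"
    by (simp add: emeasure_distr box emeasure_lborel_box)
  also have "\<dots> = (\<Prod>i\<in>UNIV. u $ Abs_wellordered i - l $ Abs_wellordered i)"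
    by (simp add: prod_Basis_vec of_wellordered_def)
  also have "\<dots> = (\<Prod>j\<in>UNIV. u $ j - l $ j)"
    using prod.reindex_bij_betw[OF bij_Abs_wellordered, of "\<lambda>j. u $ j - l $ j"] by simp
  finally show "emeasure (distr lborel borel to_wellordered) (box l u) = (\<Prod>b\<in>Basis. (u - l) \<bullet> b)"
    by (simp add: prod_Basis_vec)
qed simp

lemma nn_integral_of_wellordered:
  fixes F :: "real^'n \<Rightarrow> ennreal"
  assumes [measurable]: "F \<in> borel_measurable borel"
  shows "(\<integral>\<^sup>+y. F (of_wellordered y) \<partial>lborel) = (\<integral>\<^sup>+x. F x \<partial>lborel)"
proof -
  have "(\<integral>\<^sup>+y. F (of_wellordered y) \<partial>lborel)
      = (\<integral>\<^sup>+y. F (of_wellordered y) \<partial>distr lborel borel (to_wellordered :: real^'n \<Rightarrow> _))"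
    by (simp add: distr_lborel_to_wellordered)
  also have "\<dots> = (\<integral>\<^sup>+x. F x \<partial>lborel)"
    by (subst nn_integral_distr) auto
  finally show ?thesis .
qed

section \<open>Inversion in the unit sphere\<close>

definition inversion :: "real^'n \<Rightarrow> real^'n" where
  "inversion x = (1 / (norm x)\<^sup>2) *\<^sub>R x"

lemma norm_inversion: "norm (inversion x) = 1 / norm x"
  by (cases "x = 0") (auto simp: inversion_def power2_eq_square)

lemma inversion_inversion [simp]: "inversion (inversion x) = x"
  by (cases "x = 0") (auto simp: inversion_def norm_inversion power2_eq_square)

lemma inversion_0 [simp]: "inversion 0 = 0"
  by (simp add: inversion_def)

lemma inversion_eq_0_iff [simp]: "inversion x = 0 \<longleftrightarrow> x = 0"
  by (auto simp: inversion_def)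

lemma inversion_of_wellordered: "inversion (of_wellordered y) = of_wellordered (inversion y)"
  by (simp add: inversion_def norm_of_wellordered of_wellordered_scaleR)

lemma borel_measurable_inversion [measurable]: "inversion \<in> borel_measurable borel"
  unfolding inversion_def by measurable

definition reflect_orth :: "real^'n \<Rightarrow> real^'n \<Rightarrow> real^'n" where
  "reflect_orth x h = h - (2 * (x \<bullet> h) / (norm x)\<^sup>2) *\<^sub>R x"

lemma linear_reflect_orth: "linear (reflect_orth x)"
  unfolding reflect_orth_def
  by (rule linearI) (simp_all add: inner_add_right add_divide_distrib scaleR_add_left algebra_simps)

lemma reflect_orth_reflect_orth: "x \<noteq> 0 \<Longrightarrow> reflect_orth x (reflect_orth x h) = h"
  by (simp add: reflect_orth_def power2_norm_eq_inner[symmetric] algebra_simps)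

lemma inversion_has_derivative:
  assumes "x \<noteq> 0"
  shows "(inversion has_derivative (\<lambda>h. (1 / (norm x)\<^sup>2) *\<^sub>R reflect_orth x h)) (at x)"
proof -
  have inversion_eq: "inversion = (\<lambda>x. inverse (x \<bullet> x) *\<^sub>R x)"
    by (auto simp: inversion_def power2_norm_eq_inner divide_inverse)
  have "x \<bullet> x \<noteq> 0" using assms by simp
  from has_derivative_scaleR[OF Deriv.has_derivative_inverse[OF this
      has_derivative_inner[OF has_derivative_ident has_derivative_ident]] has_derivative_ident]
  have "((\<lambda>x. inverse (x \<bullet> x) *\<^sub>R x) has_derivative
      (\<lambda>h. inverse (x \<bullet> x) *\<^sub>R h + (- (inverse (x \<bullet> x) * (x \<bullet> h + h \<bullet> x) * inverse (x \<bullet> x))) *\<^sub>R x)) (at x)"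
    by simp
  moreover have "inverse (x \<bullet> x) *\<^sub>R h + (- (inverse (x \<bullet> x) * (x \<bullet> h + h \<bullet> x) * inverse (x \<bullet> x))) *\<^sub>R x
      = (1 / (norm x)\<^sup>2) *\<^sub>R reflect_orth x h" for h
    by (simp add: reflect_orth_def power2_norm_eq_inner inner_commute[of h x] scaleR_diff_right
        divide_inverse algebra_simps)
  ultimately show ?thesis
    unfolding inversion_eq by simp
qed

lemma abs_det_inversion_derivative:
  assumes "x \<noteq> (0 :: real^'n)"
  shows "\<bar>det (matrix (\<lambda>h. (1 / (norm x)\<^sup>2) *\<^sub>R reflect_orth x h))\<bar> = norm x powr (- 2 * real CARD('n))"
proof -
  have "det (matrix (reflect_orth x)) ^ 2 = det (matrix (reflect_orth x \<circ> reflect_orth x))"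
    by (simp add: matrix_compose[OF linear_reflect_orth linear_reflect_orth] det_mul power2_eq_square)
  also have "reflect_orth x \<circ> reflect_orth x = id"
    using reflect_orth_reflect_orth[OF assms] by (simp add: fun_eq_iff)
  finally have "det (matrix (reflect_orth x)) ^ 2 = 1"
    by (simp only: matrix_id det_I)
  then have reflection: "\<bar>det (matrix (reflect_orth x))\<bar> = 1"
    by (simp add: abs_square_eq_1)
  have "(\<lambda>h. (1 / (norm x)\<^sup>2) *\<^sub>R reflect_orth x h) = (*\<^sub>R) (1 / (norm x)\<^sup>2) \<circ> reflect_orth x"
    by (simp add: o_def)
  then have "\<bar>det (matrix (\<lambda>h. (1 / (norm x)\<^sup>2) *\<^sub>R reflect_orth x h))\<bar> = (1 / (norm x)\<^sup>2) ^ CARD('n)"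
    by (simp add: matrix_compose[OF linear_reflect_orth linear_scaleR] det_mul det_matrix_scaleR
        abs_mult reflection)
  also have "\<dots> = (norm x powr (-2)) ^ CARD('n)"
    using assms by (simp add: powr_minus_divide powr_numeral)
  also have "\<dots> = norm x powr (- 2 * real CARD('n))"
    using assms by (simp add: powr_powr powr_realpow[symmetric])
  finally show ?thesis .
qed

lemma emeasure_distr_density_inversion:
  fixes A :: "(real^'n::{finite,wellorder}) set"
  assumes A: "A \<in> sets borel" "emeasure lborel A < \<infinity>"
  shows "emeasure (distr (density lborel (\<lambda>x. ennreal (norm x powr (- 2 * real CARD('n))))) borel inversion) A
    = emeasure lborel A"
proof -
  let ?w = "\<lambda>x::real^'n::{finite,wellorder}. ennreal (norm x powr (- 2 * real CARD('n)))"
  define S where "S = inversion -` A - {0}"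
  have preimage: "inversion -` A \<in> sets borel"
    using A by (simp add: measurable_sets_borel[OF borel_measurable_inversion])
  then have S: "S \<in> sets lebesgue"
    unfolding S_def by simp
  have image_S: "inversion ` S = A - {0}"
    unfolding S_def by (auto simp: image_iff) (metis DiffI inversion_eq_0_iff inversion_inversion singletonD vimage_eq)
  have deriv_S: "\<And>x. x \<in> S \<Longrightarrow>
      (inversion has_derivative (\<lambda>h. (1 / (norm x)\<^sup>2) *\<^sub>R reflect_orth x h)) (at x within S)"
    unfolding S_def by (simp add: inversion_has_derivative has_derivative_at_withinI)
  have inj_S: "inj_on inversion S"
    by (rule inj_on_inverseI[where g=inversion]) simp
  have null_0: "{0::real^'n::{finite,wellorder}} \<in> null_sets lborel"
    by (simp add: countable_imp_null_set_lborel)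
  have "measure lebesgue (A - {0}) = measure lborel A"
    using A measure_completion[of "A - {0}" lborel] measure_Diff_null_set[OF _ null_0] by simp
  moreover have "A - {0} \<in> lmeasurable"
    using A by (intro fmeasurableI) (auto simp: emeasure_Diff_null_set[OF null_0] emeasure_completion)
  ultimately have "((\<lambda>x. \<bar>det (matrix (\<lambda>h. (1 / (norm x)\<^sup>2) *\<^sub>R reflect_orth x h))\<bar>)
      has_integral measure lborel A) S"
    using has_measure_differentiable_image[OF S deriv_S inj_S, of "measure lborel A"] image_S
    by simp
  then have "((\<lambda>x. norm x powr (- 2 * real CARD('n))) has_integral measure lborel A) S"
    by (rule has_integral_eq[rotated]) (simp add: S_def abs_det_inversion_derivative)
  then have integral_S: "(\<integral>\<^sup>+x\<in>S. ?w x \<partial>lborel) = ennreal (measure lborel A)"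
    by (rule nn_integral_has_integral_lebesgue'[rotated]) simp
  have "emeasure (distr (density lborel ?w) borel inversion) A = (\<integral>\<^sup>+x\<in>inversion -` A. ?w x \<partial>lborel)"
    using A preimage by (simp add: emeasure_distr emeasure_density)
  also have "\<dots> = (\<integral>\<^sup>+x\<in>S. ?w x \<partial>lborel)"
    using AE_not_in[OF null_0]
    by (intro nn_integral_cong_AE) (eventually_elim, auto simp: S_def indicator_def)
  also have "\<dots> = ennreal (measure lborel A)"
    by (rule integral_S)
  also have "\<dots> = emeasure lborel A"
    using A by (simp add: emeasure_eq_ennreal_measure)
  finally show ?thesis .
qed

lemma distr_density_inversion_wellorder:
  "distr (density lborel (\<lambda>x. ennreal (norm x powr (- 2 * real CARD('n))))) borel inversion
     = (lborel :: (real^'n::{finite,wellorder}) measure)"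
proof (rule lborel_eqI[symmetric])
  fix l u :: "real^'n::{finite,wellorder}"
  assume "\<And>b. b \<in> Basis \<Longrightarrow> l \<bullet> b \<le> u \<bullet> b"
  then show "emeasure (distr (density lborel (\<lambda>x. ennreal (norm x powr (- 2 * real CARD('n))))) borel inversion)
      (box l u) = (\<Prod>b\<in>Basis. (u - l) \<bullet> b)"
    by (subst emeasure_distr_density_inversion) (simp_all add: emeasure_lborel_box_eq)
qed simp

lemma nn_integral_inversion:
  fixes g :: "real^'n \<Rightarrow> ennreal"
  assumes [measurable]: "g \<in> borel_measurable borel"
  shows "(\<integral>\<^sup>+x. ennreal (norm x powr (- 2 * real CARD('n))) * g (inversion x) \<partial>lborel) = (\<integral>\<^sup>+x. g x \<partial>lborel)"
proof -
  let ?w = "\<lambda>y::real^('n wellordered). ennreal (norm y powr (- 2 * real CARD('n wellordered)))"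
  have "(\<integral>\<^sup>+x. ennreal (norm x powr (- 2 * real CARD('n))) * g (inversion x) \<partial>lborel)
      = (\<integral>\<^sup>+y. ?w y * (g \<circ> of_wellordered) (inversion y) \<partial>lborel)"
    by (subst nn_integral_of_wellordered[symmetric])
      (simp_all add: norm_of_wellordered inversion_of_wellordered card_wellordered)
  also have "\<dots> = (\<integral>\<^sup>+y. (g \<circ> of_wellordered) y \<partial>distr (density lborel ?w) borel inversion)"
    by (simp add: nn_integral_distr nn_integral_density)
  also have "\<dots> = (\<integral>\<^sup>+x. g x \<partial>lborel)"
    unfolding distr_density_inversion_wellorder by (simp add: nn_integral_of_wellordered)
  finally show ?thesis .
qed


section \<open>Calculus of partial derivatives\<close>

lemma sum_axis_mult: "(\<Sum>j\<in>UNIV. axis i (1::real) $ j * c j) = c i"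
  by (simp add: axis_def if_distrib[of "\<lambda>a. a * _"] cong: if_cong)

lemma partial_eq_has_derivative:
  assumes "(f has_derivative f') (at x)"
  shows "partial i f x = f' (axis i 1)"
proof -
  have "((\<lambda>t::real. x + t *\<^sub>R axis i 1) has_derivative (\<lambda>t. t *\<^sub>R axis i 1)) (at 0)"
    by (auto intro!: derivative_eq_intros)
  from has_derivative_compose[OF this] assms
  have "((\<lambda>t. f (x + t *\<^sub>R axis i 1)) has_derivative (\<lambda>t. f' (t *\<^sub>R axis i 1))) (at 0)"
    by (simp add: o_def)
  moreover have "(\<lambda>t. f' (t *\<^sub>R axis i 1)) = (*) (f' (axis i 1))"
    using has_derivative_linear[OF assms] by (simp add: linear_scale fun_eq_iff)
  ultimately have "((\<lambda>t. f (x + t *\<^sub>R axis i 1)) has_field_derivative f' (axis i 1)) (at 0)"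
    by (simp add: has_field_derivative_def mult.commute)
  then show ?thesis
    unfolding partial_def by (rule DERIV_imp_deriv)
qed

lemma partial_cong_open:
  assumes "open U" "x \<in> U" and eq: "\<And>y. y \<in> U \<Longrightarrow> f y = g y"
  shows "partial i f x = partial i g x"
proof -
  obtain e where e: "e > 0" "ball x e \<subseteq> U"
    using assms open_contains_ball by blast
  have "\<forall>\<^sub>F t in nhds 0. f (x + t *\<^sub>R axis i 1) = g (x + t *\<^sub>R axis i 1)"
    unfolding eventually_nhds_metric
    using e eq by (intro exI[of _ e]) (auto simp: dist_norm subset_iff)
  then have "((\<lambda>t. f (x + t *\<^sub>R axis i 1)) has_field_derivative D) (at 0) \<longleftrightarrow>
      ((\<lambda>t. g (x + t *\<^sub>R axis i 1)) has_field_derivative D) (at 0)" for D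
    by (rule DERIV_cong_ev[OF refl _ refl])
  then show ?thesis
    unfolding partial_def deriv_def by simp
qed

lemma has_derivative_partials:
  assumes "f differentiable (at x)"
  shows "(f has_derivative (\<lambda>h. \<Sum>j\<in>UNIV. h $ j * partial j f x)) (at x)"
proof -
  obtain f' where f': "(f has_derivative f') (at x)"
    using assms differentiable_def by blast
  have "f' h = (\<Sum>j\<in>UNIV. h $ j * partial j f x)" for h
  proof -
    have "f' h = f' (\<Sum>j\<in>UNIV. h $ j *\<^sub>R axis j 1)"
      using basis_expansion[of h] by (simp add: scalar_mult_eq_scaleR)
    also have "\<dots> = (\<Sum>j\<in>UNIV. h $ j * f' (axis j 1))"
      using has_derivative_linear[OF f'] by (simp add: linear_sum linear_scale)
    finally show ?thesis
      by (simp add: partial_eq_has_derivative[OF f'])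
  qed
  then have "f' = (\<lambda>h. \<Sum>j\<in>UNIV. h $ j * partial j f x)" ..
  then show ?thesis
    using f' by simp
qed

lemma partial_add:
  "f differentiable (at x) \<Longrightarrow> g differentiable (at x) \<Longrightarrow>
    partial i (\<lambda>x. f x + g x) x = partial i f x + partial i g x"
  by (simp add: partial_eq_has_derivative[OF has_derivative_add[OF has_derivative_partials has_derivative_partials]]
      sum_axis_mult)

lemma partial_diff:
  "f differentiable (at x) \<Longrightarrow> g differentiable (at x) \<Longrightarrow>
    partial i (\<lambda>x. f x - g x) x = partial i f x - partial i g x"
  by (simp add: partial_eq_has_derivative[OF has_derivative_diff[OF has_derivative_partials has_derivative_partials]]
      sum_axis_mult)

lemma partial_mult:
  "f differentiable (at x) \<Longrightarrow> g differentiable (at x) \<Longrightarrow>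
    partial i (\<lambda>x. f x * g x) x = partial i f x * g x + f x * partial i g x"
  by (simp add: partial_eq_has_derivative[OF has_derivative_mult[OF has_derivative_partials has_derivative_partials]]
      sum_axis_mult)

lemma partial_sum:
  assumes "finite S" "\<And>k. k \<in> S \<Longrightarrow> f k differentiable (at x)"
  shows "partial i (\<lambda>x. \<Sum>k\<in>S. f k x) x = (\<Sum>k\<in>S. partial i (f k) x)"
proof -
  have "((\<lambda>x. \<Sum>k\<in>S. f k x) has_derivative (\<lambda>h. \<Sum>k\<in>S. \<Sum>j\<in>UNIV. h $ j * partial j (f k) x)) (at x)"
    using assms by (intro has_derivative_sum has_derivative_partials)
  then show ?thesis
    by (simp add: partial_eq_has_derivative sum_axis_mult)
qed

lemma partial_const: "partial i (\<lambda>x. c) x = 0"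
  using partial_eq_has_derivative[OF has_derivative_const, of i c x] by simp

lemma partial_component:
  fixes x :: "real^'n"
  shows "partial i (\<lambda>x. x $ j) x = (if j = i then 1 else 0)"
proof -
  have "((\<lambda>x::real^'n. x $ j) has_derivative (\<lambda>h. h $ j)) (at x)"
    by (rule bounded_linear_imp_has_derivative) (rule bounded_linear_vec_nth)
  then show ?thesis
    by (simp add: partial_eq_has_derivative axis_def)
qed

lemma differentiable_component: "(\<lambda>x::real^'n. x $ j) differentiable (at x)"
  using bounded_linear_imp_differentiable bounded_linear_vec_nth by blast

lemma has_derivative_norm_powr:
  fixes x :: "real^'n"
  assumes "x \<noteq> 0"
  shows "((\<lambda>x. norm x powr s) has_derivative (\<lambda>h. (s * norm x powr s / norm x) * (h \<bullet> sgn x))) (at x)"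
proof -
  have "((\<lambda>r. r powr s) has_real_derivative (s * norm x powr s / norm x)) (at (norm x))"
    using assms by (auto intro!: derivative_eq_intros simp: powr_diff)
  from has_derivative_compose[OF has_derivative_norm[OF assms] this[unfolded has_field_derivative_def]]
  show ?thesis by (simp add: o_def)
qed

lemma differentiable_norm_powr:
  "(x :: real^'n) \<noteq> 0 \<Longrightarrow> (\<lambda>x. norm x powr s) differentiable (at x)"
  using has_derivative_norm_powr differentiable_def by blast

lemma partial_norm_powr:
  fixes x :: "real^'n"
  assumes "x \<noteq> 0"
  shows "partial i (\<lambda>x. norm x powr s) x = s * norm x powr (s - 2) * x $ i"
proof -
  have "partial i (\<lambda>x. norm x powr s) x = s * (norm x powr s / (norm x)\<^sup>2) * x $ i"
    using assms by (simp add: partial_eq_has_derivative[OF has_derivative_norm_powr[OF assms]]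
        sgn_div_norm inner_axis' field_simps power2_eq_square)
  also have "norm x powr s / (norm x)\<^sup>2 = norm x powr (s - 2)"
    using assms by (simp add: powr_diff powr_numeral)
  finally show ?thesis .
qed

lemma differentiable_comp_inversion:
  "x \<noteq> 0 \<Longrightarrow> w differentiable (at (inversion x)) \<Longrightarrow> (\<lambda>x. w (inversion x)) differentiable (at x)"
  using differentiable_compose differentiable_def inversion_has_derivative by blast

lemma partial_comp_inversion:
  fixes x :: "real^'n"
  assumes x: "x \<noteq> 0" and w: "w differentiable (at (inversion x))"
  shows "partial i (\<lambda>x. w (inversion x)) x = norm x powr (-2) * partial i w (inversion x)
      - 2 * x $ i * norm x powr (-4) * (\<Sum>k\<in>UNIV. x $ k * partial k w (inversion x))"
proof -
  have "partial i (\<lambda>x. w (inversion x)) x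
      = (\<Sum>j\<in>UNIV. ((1 / (norm x)\<^sup>2) *\<^sub>R reflect_orth x (axis i 1)) $ j * partial j w (inversion x))"
    using partial_eq_has_derivative[OF has_derivative_compose[OF inversion_has_derivative[OF x]
        has_derivative_partials[OF w]]]
    by (simp add: o_def)
  also have "\<dots> = (\<Sum>j\<in>UNIV. (1 / (norm x)\<^sup>2) * (axis i 1 $ j * partial j w (inversion x))
      - (2 * x $ i / (norm x)^4) * (x $ j * partial j w (inversion x)))"
    by (rule sum.cong) (auto simp: reflect_orth_def inner_axis algebra_simps power2_eq_square
        power4_eq_xxxx)
  also have "\<dots> = (1 / (norm x)\<^sup>2) * partial i w (inversion x)
      - (2 * x $ i / (norm x)^4) * (\<Sum>k\<in>UNIV. x $ k * partial k w (inversion x))"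
    by (simp only: sum_subtractf sum_distrib_left[symmetric] sum_axis_mult)
  finally show ?thesis
    using x by (simp add: powr_minus_divide powr_numeral divide_inverse)
qed


lemma smooth_differentiable: "smooth f \<Longrightarrow> f differentiable (at x)"
  unfolding smooth_def by (metis iter_partial.simps(1))

lemma iter_partial_append: "iter_partial (is @ [i]) f = iter_partial is (partial i f)"
  by (induction "is") auto

lemma smooth_partial: "smooth f \<Longrightarrow> smooth (partial i f)"
  unfolding smooth_def by (metis iter_partial_append)

lemma smooth_iter_partial: "smooth f \<Longrightarrow> smooth (iter_partial is f)"
  by (induction "is") (auto intro: smooth_partial)

lemma smooth_second_partials:
  assumes "smooth u"
  shows "u differentiable (at y)" "partial j u differentiable (at y)"
    "partial k (partial j u) differentiable (at y)"
  using smooth_differentiable smooth_partial assms by blast+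

definition smooth_on :: "(real^'n) set \<Rightarrow> (real^'n \<Rightarrow> real) \<Rightarrow> bool" where
  "smooth_on U f \<longleftrightarrow> (\<forall>is. \<forall>x\<in>U. iter_partial is f differentiable (at x))"

lemma differentiable_transform_open:
  "f differentiable (at x) \<Longrightarrow> open U \<Longrightarrow> x \<in> U \<Longrightarrow> (\<And>y. y \<in> U \<Longrightarrow> f y = g y) \<Longrightarrow>
    g differentiable (at x)"
  unfolding differentiable_def using has_derivative_transform_within_open by blast

lemma iter_partial_eq_0_on_open:
  assumes "open V" "\<And>y. y \<in> V \<Longrightarrow> f y = 0" "x \<in> V"
  shows "iter_partial is f x = 0"
  using assms(3)
proof (induction "is" arbitrary: x)
  case Nil
  then show ?case using assms by simp
next
  case (Cons i "is")
  then have "partial i (iter_partial is f) x = partial i (\<lambda>x. 0) x"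
    by (intro partial_cong_open[OF assms(1)])
  then show ?case by (simp add: partial_const)
qed

lemma smooth_if_smooth_on_punctured:
  fixes f :: "real^'n \<Rightarrow> real"
  assumes "smooth_on (- {0}) f" "e > 0" "\<And>y. norm y < e \<Longrightarrow> f y = 0"
  shows "smooth f"
  unfolding smooth_def
proof (intro allI)
  fix "is" and x :: "real^'n"
  show "iter_partial is f differentiable (at x)"
  proof (cases "x = 0")
    case True
    have "\<And>y. y \<in> ball 0 e \<Longrightarrow> iter_partial is f y = 0"
      using assms by (intro iter_partial_eq_0_on_open[of "ball 0 e"]) auto
    moreover have "(\<lambda>_. 0::real) differentiable (at x)"
      by simp
    ultimately show ?thesis
      using True assms(2) by (metis centre_in_ball differentiable_transform_open open_ball)
  next
    case False
    then show ?thesis using assms(1) by (auto simp: smooth_on_def)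
  qed
qed

inductive_set fun_alg :: "(real^'n \<Rightarrow> real) set \<Rightarrow> (real^'n \<Rightarrow> real) set" for G where
  generator: "g \<in> G \<Longrightarrow> g \<in> fun_alg G"
| const: "(\<lambda>x. c) \<in> fun_alg G"
| add: "f \<in> fun_alg G \<Longrightarrow> g \<in> fun_alg G \<Longrightarrow> (\<lambda>x. f x + g x) \<in> fun_alg G"
| mult: "f \<in> fun_alg G \<Longrightarrow> g \<in> fun_alg G \<Longrightarrow> (\<lambda>x. f x * g x) \<in> fun_alg G"

lemma fun_alg_diff: "f \<in> fun_alg G \<Longrightarrow> g \<in> fun_alg G \<Longrightarrow> (\<lambda>x. f x - g x) \<in> fun_alg G"
proof -
  assume "f \<in> fun_alg G" "g \<in> fun_alg G"
  then have "(\<lambda>x. f x + (\<lambda>x. -1) x * g x) \<in> fun_alg G"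
    by (intro fun_alg.add fun_alg.mult fun_alg.const)
  then show ?thesis by simp
qed

lemma fun_alg_sum:
  "finite S \<Longrightarrow> (\<And>k. k \<in> S \<Longrightarrow> f k \<in> fun_alg G) \<Longrightarrow> (\<lambda>x. \<Sum>k\<in>S. f k x) \<in> fun_alg G"
proof (induction S rule: finite_induct)
  case empty
  then show ?case using fun_alg.const[of 0] by simp
next
  case (insert a S)
  then have "(\<lambda>x. f a x + (\<Sum>k\<in>S. f k x)) \<in> fun_alg G"
    by (intro fun_alg.add) auto
  then show ?case using insert by simp
qed

locale partials_in_fun_alg =
  fixes U :: "(real^'n) set" and G :: "(real^'n \<Rightarrow> real) set"
  assumes open_U: "open U"
    and differentiable_generator: "\<And>g x. g \<in> G \<Longrightarrow> x \<in> U \<Longrightarrow> g differentiable (at x)"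
    and partial_generator: "\<And>g i. g \<in> G \<Longrightarrow> \<exists>h\<in>fun_alg G. \<forall>x\<in>U. partial i g x = h x"
begin

lemma fun_alg_differentiable_partial:
  "f \<in> fun_alg G \<Longrightarrow> (\<forall>x\<in>U. f differentiable (at x)) \<and> (\<forall>i. \<exists>h\<in>fun_alg G. \<forall>x\<in>U. partial i f x = h x)"
proof (induction rule: fun_alg.induct)
  case (generator g)
  then show ?case using differentiable_generator partial_generator by blast
next
  case (const c)
  then show ?case by (auto simp: partial_const intro!: bexI[OF _ fun_alg.const])
next
  case (add f g)
  show ?case
  proof (intro conjI ballI allI)
    fix i
    obtain hf hg where "hf \<in> fun_alg G" "\<forall>x\<in>U. partial i f x = hf x"
      and "hg \<in> fun_alg G" "\<forall>x\<in>U. partial i g x = hg x"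
      using add by blast
    then show "\<exists>h\<in>fun_alg G. \<forall>x\<in>U. partial i (\<lambda>x. f x + g x) x = h x"
      using add by (intro bexI[of _ "\<lambda>x. hf x + hg x"]) (auto simp: partial_add intro: fun_alg.add)
  qed (use add in \<open>auto intro: differentiable_add\<close>)
next
  case (mult f g)
  show ?case
  proof (intro conjI ballI allI)
    fix i
    obtain hf hg where "hf \<in> fun_alg G" "\<forall>x\<in>U. partial i f x = hf x"
      and "hg \<in> fun_alg G" "\<forall>x\<in>U. partial i g x = hg x"
      using mult by blast
    then show "\<exists>h\<in>fun_alg G. \<forall>x\<in>U. partial i (\<lambda>x. f x * g x) x = h x"
      using mult by (intro bexI[of _ "\<lambda>x. hf x * g x + f x * hg x"])
        (auto simp: partial_mult intro: fun_alg.add fun_alg.mult)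
  qed (use mult in \<open>auto intro: differentiable_mult\<close>)
qed

lemma fun_alg_iter_partial: "g \<in> fun_alg G \<Longrightarrow> \<exists>h\<in>fun_alg G. \<forall>x\<in>U. iter_partial is g x = h x"
proof (induction "is")
  case (Cons i "is")
  then obtain h where h: "h \<in> fun_alg G" "\<forall>x\<in>U. iter_partial is g x = h x"
    by blast
  then obtain h' where h': "h' \<in> fun_alg G" "\<forall>x\<in>U. partial i h x = h' x"
    using fun_alg_differentiable_partial by blast
  have "iter_partial (i # is) g x = h' x" if "x \<in> U" for x
    using partial_cong_open[OF open_U that, of "iter_partial is g" h i] h h' that by simp
  then show ?case using h' by blast
qed auto

lemma smooth_on_fun_alg: "g \<in> fun_alg G \<Longrightarrow> smooth_on U g"
  unfolding smooth_on_def
proof (intro allI ballI)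
  fix "is" x
  assume "g \<in> fun_alg G" "x \<in> U"
  moreover obtain h where "h \<in> fun_alg G" "\<forall>x\<in>U. iter_partial is g x = h x"
    using fun_alg_iter_partial[OF \<open>g \<in> fun_alg G\<close>] by blast
  ultimately show "iter_partial is g differentiable (at x)"
    using fun_alg_differentiable_partial open_U
    by (metis differentiable_transform_open)
qed

end


section \<open>The Kelvin transform\<close>

definition kelvin :: "(real^'n \<Rightarrow> real) \<Rightarrow> real^'n \<Rightarrow> real" where
  "kelvin u x = norm x powr (2 - real CARD('n)) * u (inversion x)"

lemma kelvin_kelvin:
  fixes u :: "real^'n \<Rightarrow> real"
  assumes "u 0 = 0"
  shows "kelvin (kelvin u) = u"
proof
  fix x :: "real^'n"
  show "kelvin (kelvin u) x = u x"
  proof (cases "x = 0")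
    case False
    then show ?thesis
      by (simp add: kelvin_def norm_inversion powr_divide)
  qed (simp add: kelvin_def assms)
qed

text \<open>Away from the origin, \<open>kelvin u\<close> lies in the algebra generated by the coordinates, the
  powers of the norm and the derivatives of \<open>u\<close> composed with the inversion, which is closed
  under partial differentiation by the chain rule.\<close>

lemma smooth_on_kelvin:
  fixes u :: "real^'n \<Rightarrow> real"
  assumes u: "smooth u"
  shows "smooth_on (- {0}) (kelvin u)"
proof -
  define G :: "(real^'n \<Rightarrow> real) set" where
    "G = range (\<lambda>j x. x $ j) \<union> range (\<lambda>s x. norm x powr s)
      \<union> range (\<lambda>is x. iter_partial is u (inversion x))"
  have component: "(\<lambda>x. x $ j) \<in> fun_alg G" for j
    unfolding G_def by (intro fun_alg.generator) auto
  have norm_powr: "(\<lambda>x. norm x powr s) \<in> fun_alg G" for s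
    unfolding G_def by (intro fun_alg.generator) auto
  have derivs: "(\<lambda>x. iter_partial is u (inversion x)) \<in> fun_alg G" for "is"
    unfolding G_def by (intro fun_alg.generator) auto
  have differentiable_derivs: "iter_partial is u differentiable (at y)" for "is" y
    using smooth_iter_partial[OF u] smooth_differentiable by blast
  interpret partials_in_fun_alg "- {0}" G
  proof
    show "open (- {0 :: real^'n})"
      by auto
  next
    fix g and x :: "real^'n"
    assume "g \<in> G" "x \<in> - {0}"
    then show "g differentiable (at x)"
      unfolding G_def
      by (auto intro: differentiable_component differentiable_norm_powr
          differentiable_comp_inversion differentiable_derivs)
  next
    fix g i
    assume "g \<in> G"
    then consider j where "g = (\<lambda>x. x $ j)" | s where "g = (\<lambda>x. norm x powr s)"
      | "is" where "g = (\<lambda>x. iter_partial is u (inversion x))"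
      unfolding G_def by blast
    then show "\<exists>h\<in>fun_alg G. \<forall>x\<in>- {0}. partial i g x = h x"
    proof cases
      case (1 j)
      then show ?thesis
        by (intro bexI[OF _ fun_alg.const[of "if j = i then 1 else 0"]]) (simp add: partial_component)
    next
      case (2 s)
      have "(\<lambda>x. (\<lambda>x. s) x * (\<lambda>x. norm x powr (s - 2)) x * (\<lambda>x. x $ i) x) \<in> fun_alg G"
        by (intro fun_alg.mult fun_alg.const norm_powr component)
      then show ?thesis
        unfolding 2 by (intro bexI) (auto simp: partial_norm_powr)
    next
      case (3 "is")
      have "(\<lambda>x. (\<lambda>x. norm x powr (-2)) x * (\<lambda>x. iter_partial (i # is) u (inversion x)) x
          - (\<lambda>x. 2) x * (\<lambda>x. x $ i) x * (\<lambda>x. norm x powr (-4)) x *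
            (\<lambda>x. \<Sum>k\<in>UNIV. (\<lambda>k x. x $ k * iter_partial (k # is) u (inversion x)) k x) x) \<in> fun_alg G"
        by (intro fun_alg_diff fun_alg.mult fun_alg.const norm_powr component derivs fun_alg_sum) auto
      then show ?thesis
        unfolding 3 by (intro bexI) (auto simp: partial_comp_inversion differentiable_derivs)
    qed
  qed
  have "kelvin u \<in> fun_alg G"
    unfolding kelvin_def using fun_alg.mult[OF norm_powr derivs[of "[]"]] by simp
  then show ?thesis
    by (rule smooth_on_fun_alg)
qed

lemma test_fun_vanishes_outside_annulus:
  assumes "test_fun u"
  obtains r R where "0 < r" "0 < R" "\<And>y. u y \<noteq> 0 \<Longrightarrow> r \<le> norm y \<and> norm y \<le> R"
proof -
  have "compact (tsupport u)" "0 \<notin> tsupport u"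
    using assms by (auto simp: test_fun_def)
  moreover have "open (- tsupport u)"
    by (simp add: tsupport_def open_Compl)
  ultimately obtain r R where "0 < r" "ball 0 r \<subseteq> - tsupport u"
    and "0 < R" "\<And>y. y \<in> tsupport u \<Longrightarrow> norm y \<le> R"
    using open_contains_ball compact_imp_bounded bounded_pos by (metis ComplI)
  moreover have "\<And>y. u y \<noteq> 0 \<Longrightarrow> y \<in> tsupport u"
    by (simp add: tsupport_def closure_subset[THEN subsetD])
  ultimately show ?thesis
    by (intro that[of r R]) (auto simp: subset_iff not_less)
qed

lemma test_fun_at_0: "test_fun u \<Longrightarrow> u 0 = 0"
  using closure_subset by (force simp: test_fun_def tsupport_def)

lemma kelvin_eq_0_near_0:
  assumes "0 < R" "\<And>y. u y \<noteq> 0 \<Longrightarrow> norm y \<le> R" "norm x < 1 / R"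
  shows "kelvin u x = 0"
proof (cases "x = 0")
  case False
  then have "norm (inversion x) > R"
    using assms(1,3) by (simp add: norm_inversion field_simps)
  then show ?thesis
    using assms(2) by (force simp: kelvin_def)
qed (simp add: kelvin_def)

lemma test_fun_kelvin:
  fixes u :: "real^'n \<Rightarrow> real"
  assumes u: "test_fun u"
  shows "test_fun (kelvin u)"
proof -
  obtain r R where rR: "0 < r" "0 < R" "\<And>y. u y \<noteq> 0 \<Longrightarrow> r \<le> norm y \<and> norm y \<le> R"
    using test_fun_vanishes_outside_annulus[OF u] by blast
  have "smooth (kelvin u)"
    using u rR by (intro smooth_if_smooth_on_punctured[OF smooth_on_kelvin, where e = "1 / R"])
      (auto simp: test_fun_def intro: kelvin_eq_0_near_0)
  define A where "A = {x::real^'n. 1 / R \<le> norm x \<and> norm x \<le> 1 / r}"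
  have "{x. kelvin u x \<noteq> 0} \<subseteq> A"
  proof
    fix x
    assume "x \<in> {x. kelvin u x \<noteq> 0}"
    then have "x \<noteq> 0" "u (inversion x) \<noteq> 0"
      by (auto simp: kelvin_def)
    then show "x \<in> A"
      using rR(3)[of "inversion x"] rR(1,2) by (auto simp: A_def norm_inversion field_simps)
  qed
  moreover have "closed A"
    unfolding A_def by (intro closed_Collect_conj closed_Collect_le continuous_intros)
  ultimately have "tsupport (kelvin u) \<subseteq> A"
    unfolding tsupport_def by (rule closure_minimal)
  moreover have "bounded A"
    unfolding A_def bounded_iff by auto
  ultimately show ?thesis
    using \<open>smooth (kelvin u)\<close> rR(2)
    by (auto simp: test_fun_def compact_eq_bounded_closed tsupport_def bounded_subset A_def)
qed


section \<open>The Laplacian of the Kelvin transform\<close>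

definition dot_grad_inversion :: "(real^'n \<Rightarrow> real) \<Rightarrow> real^'n \<Rightarrow> real" where
  "dot_grad_inversion u y = (\<Sum>k\<in>UNIV. y $ k * partial k u (inversion y))"

lemma differentiable_dot_grad_inversion:
  "smooth u \<Longrightarrow> x \<noteq> 0 \<Longrightarrow> dot_grad_inversion u differentiable (at x)"
  unfolding dot_grad_inversion_def[abs_def]
  by (intro differentiable_sum ballI differentiable_mult differentiable_component
      differentiable_comp_inversion smooth_second_partials) auto

lemma partial_dot_grad_inversion:
  assumes u: "smooth u" and x: "x \<noteq> 0"
  shows "partial i (dot_grad_inversion u) x = partial i u (inversion x)
     + norm x powr (-2) * (\<Sum>k\<in>UNIV. x $ k * partial i (partial k u) (inversion x))
     - 2 * x $ i * norm x powr (-4) *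
       (\<Sum>k\<in>UNIV. x $ k * (\<Sum>l\<in>UNIV. x $ l * partial l (partial k u) (inversion x)))"
proof -
  have "partial i (dot_grad_inversion u) x
      = (\<Sum>k\<in>UNIV. partial i (\<lambda>y. y $ k * partial k u (inversion y)) x)"
    unfolding dot_grad_inversion_def[abs_def]
    using x by (intro partial_sum differentiable_mult differentiable_component
        differentiable_comp_inversion smooth_second_partials[OF u]) auto
  also have "\<dots> = (\<Sum>k\<in>UNIV. (if k = i then partial k u (inversion x) else 0)
      + x $ k * (norm x powr (-2) * partial i (partial k u) (inversion x)
        - 2 * x $ i * norm x powr (-4) * (\<Sum>l\<in>UNIV. x $ l * partial l (partial k u) (inversion x))))"
    using x by (intro sum.cong) (simp_all add: partial_mult differentiable_component
        differentiable_comp_inversion smooth_second_partials[OF u] partial_component partial_comp_inversion)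
  finally show ?thesis
    by (simp add: sum.distrib sum_subtractf sum_distrib_left algebra_simps)
qed

lemma partial_norm_powr_mult_comp_inversion:
  assumes u: "smooth u" and y: "y \<noteq> 0"
  shows "partial i (\<lambda>y. norm y powr a * u (inversion y)) y
    = a * norm y powr (a - 2) * y $ i * u (inversion y)
      + norm y powr a * (norm y powr (-2) * partial i u (inversion y)
        - 2 * y $ i * norm y powr (-4) * dot_grad_inversion u y)"
  using y by (simp add: partial_mult differentiable_norm_powr differentiable_comp_inversion
      smooth_second_partials[OF u] partial_norm_powr partial_comp_inversion dot_grad_inversion_def)

lemma second_partial_norm_powr_mult_comp_inversion:
  fixes u :: "real^'n \<Rightarrow> real" and a :: real and i :: 'n
  assumes u: "smooth u" and x: "x \<noteq> 0"
  defines "r \<equiv> norm x" and "P \<equiv> norm x powr a" and "U0 \<equiv> u (inversion x)"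
    and "T \<equiv> dot_grad_inversion u x"
    and "Q \<equiv> (\<Sum>k\<in>UNIV. x $ k * (\<Sum>l\<in>UNIV. x $ l * partial l (partial k u) (inversion x)))"
    and "S1 \<equiv> (\<Sum>k\<in>UNIV. x $ k * partial k (partial i u) (inversion x))"
    and "S2 \<equiv> (\<Sum>k\<in>UNIV. x $ k * partial i (partial k u) (inversion x))"
  shows "partial i (partial i (\<lambda>y. norm y powr a * u (inversion y))) x
    = (a*(a-2)*P*U0/r^4 - 2*a*P*T/r^6 - 2*(a-4)*P*T/r^6 + 4*P*Q/r^8) * (x$i)\<^sup>2
      + (a*P*U0/r^2 - 2*P*T/r^4)
      + ((2*a - 4)*P/r^4) * (x$i * partial i u (inversion x))
      + (P/r^4) * partial i (partial i u) (inversion x)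
      + (-2*P/r^6) * (x$i * S1) + (-2*P/r^6) * (x$i * S2)" (is "_ = ?rhs")
proof -
  have r: "r > 0" using x by (simp add: r_def)
  have powr_r: "r powr (a - 2) = P / r^2" "r powr (a - 2 - 2) = P / r^4" "r powr (a - 4) = P / r^4"
    "r powr (-2) = 1 / r^2" "r powr (-4) = 1 / r^4" "r powr (-6) = 1 / r^6"
    "r powr (-2-2) = 1 / r^4" "r powr (-4-2) = 1 / r^6" "r powr a = P"
    using r by (simp_all add: r_def P_def powr_diff powr_numeral powr_minus_divide)
  have "partial i (partial i (\<lambda>y. norm y powr a * u (inversion y))) x
    = partial i (\<lambda>y. a * norm y powr (a - 2) * y $ i * u (inversion y)
      + norm y powr a * (norm y powr (-2) * partial i u (inversion y)
        - 2 * y $ i * norm y powr (-4) * dot_grad_inversion u y)) x"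
    using x by (intro partial_cong_open[of "- {0}"]) (auto simp: partial_norm_powr_mult_comp_inversion[OF u])
  also have "\<dots> = ?rhs"
    apply (simp add: partial_mult partial_add partial_diff partial_const partial_component
        partial_norm_powr partial_comp_inversion partial_dot_grad_inversion[OF u] x
        differentiable_mult differentiable_add differentiable_diff differentiable_component
        differentiable_norm_powr differentiable_comp_inversion smooth_second_partials[OF u]
        differentiable_dot_grad_inversion[OF u])
    apply (simp only: flip: P_def r_def U0_def T_def Q_def S1_def S2_def)
    apply (simp only: powr_r T_def[symmetric] dot_grad_inversion_def[symmetric])
    using r apply (simp add: field_simps)
    apply algebra
    done
  finally show ?thesis .
qed


lemma sum_power2_norm: "(\<Sum>i\<in>UNIV. (x $ i)\<^sup>2) = (norm (x :: real^'n))\<^sup>2"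
  by (simp add: norm_vec_def L2_set_def sum_nonneg)

lemma laplacian_kelvin:
  fixes u :: "real^'n \<Rightarrow> real"
  assumes u: "smooth u" and x: "x \<noteq> 0"
  shows "laplacian (kelvin u) x = norm x powr (-2 - real CARD('n)) * laplacian u (inversion x)"
proof -
  define a where "a = 2 - real CARD('n)"
  define r where "r = norm x"
  define P where "P = norm x powr a"
  define U0 where "U0 = u (inversion x)"
  define T where "T = dot_grad_inversion u x"
  define Q where "Q = (\<Sum>k\<in>UNIV. x $ k * (\<Sum>l\<in>UNIV. x $ l * partial l (partial k u) (inversion x)))"
  define L where "L = laplacian u (inversion x)"
  have r: "r > 0" using x by (simp add: r_def)
  have kelvin_eq: "kelvin u = (\<lambda>y. norm y powr a * u (inversion y))"
    by (simp add: kelvin_def a_def fun_eq_iff)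
  have Q_eq: "(\<Sum>i\<in>UNIV. x $ i * (\<Sum>k\<in>UNIV. x $ k * partial k (partial i u) (inversion x))) = Q"
    by (simp add: Q_def)
  have T_eq: "(\<Sum>i\<in>UNIV. x $ i * partial i u (inversion x)) = T"
    by (simp add: T_def dot_grad_inversion_def)
  have r_eq: "(\<Sum>i\<in>UNIV. (x $ i)\<^sup>2) = r\<^sup>2"
    by (simp add: r_def sum_power2_norm)
  have Q_swap: "(\<Sum>i\<in>UNIV. x $ i * (\<Sum>k\<in>UNIV. x $ k * partial i (partial k u) (inversion x))) = Q"
    unfolding Q_def sum_distrib_left by (subst sum.swap) (simp add: mult.left_commute)
  have "laplacian (kelvin u) x
    = (a*(a-2)*P*U0/r^4 - 2*a*P*T/r^6 - 2*(a-4)*P*T/r^6 + 4*P*Q/r^8) * (\<Sum>i\<in>UNIV. (x$i)\<^sup>2)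
      + real CARD('n) * (a*P*U0/r^2 - 2*P*T/r^4)
      + ((2*a - 4)*P/r^4) * (\<Sum>i\<in>UNIV. x$i * partial i u (inversion x))
      + (P/r^4) * L
      + (-2*P/r^6) * (\<Sum>i\<in>UNIV. x$i * (\<Sum>k\<in>UNIV. x $ k * partial k (partial i u) (inversion x)))
      + (-2*P/r^6) * (\<Sum>i\<in>UNIV. x$i * (\<Sum>k\<in>UNIV. x $ k * partial i (partial k u) (inversion x)))"
    unfolding laplacian_def kelvin_eq second_partial_norm_powr_mult_comp_inversion[OF u x]
    unfolding r_def P_def U0_def T_def Q_def L_def laplacian_def
    by (simp only: sum.distrib sum_distrib_left sum_constant)
  also have "\<dots> = (a*(a-2)*P*U0/r^4 - 2*a*P*T/r^6 - 2*(a-4)*P*T/r^6 + 4*P*Q/r^8) * r\<^sup>2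
      + real CARD('n) * (a*P*U0/r^2 - 2*P*T/r^4)
      + ((2*a - 4)*P/r^4) * T + (P/r^4) * L + (-2*P/r^6) * Q + (-2*P/r^6) * Q"
    by (simp only: Q_eq Q_swap T_eq r_eq)
  also have "\<dots> = P / r^4 * L"
    using r unfolding a_def by (simp add: field_simps)
  also have "P / r^4 = norm x powr (a - 4)"
    using r by (simp add: P_def r_def powr_diff powr_numeral)
  also have "a - 4 = -2 - real CARD('n)"
    by (simp add: a_def)
  finally show ?thesis
    by (simp add: L_def)
qed


section \<open>Transfer of the weighted norms\<close>

lemma Lp_norm_inversion:
  fixes F G :: "real^'n \<Rightarrow> real"
  assumes p: "1 \<le> p" and G [measurable]: "G \<in> borel_measurable borel" and "G 0 = 0"
    and F: "\<And>x. F x = norm x powr (- real CARD('n) * real_of_ereal (2 / p)) * G (inversion x)"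
  shows "Lp_norm p F = Lp_norm p G"
proof (cases p)
  case PInf
  then have "F = G \<circ> inversion"
    using F \<open>G 0 = 0\<close> by (auto simp: fun_eq_iff)
  then have "(SUP x. \<bar>F x\<bar>) = (SUP y\<in>range inversion. \<bar>G y\<bar>)"
    by (simp add: image_image)
  also have "range inversion = UNIV"
    by (rule surjI[of _ inversion]) simp
  finally have "(SUP x. \<bar>F x\<bar>) = (SUP y. \<bar>G y\<bar>)" .
  then show ?thesis
    using PInf by (simp add: Lp_norm_def)
next
  case (real q)
  with p have "q \<ge> 1" by simp
  have "\<bar>F x\<bar> powr q = norm x powr (- 2 * real CARD('n)) * \<bar>G (inversion x)\<bar> powr q" for x
  proof -
    have "\<bar>F x\<bar> powr q = (norm x powr (- real CARD('n) * (2 / q))) powr q * \<bar>G (inversion x)\<bar> powr q"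
      using real by (simp add: F abs_mult powr_mult)
    also have "(norm x powr (- real CARD('n) * (2 / q))) powr q = norm x powr (- 2 * real CARD('n))"
      using \<open>q \<ge> 1\<close> by (simp add: powr_powr mult.commute)
    finally show ?thesis .
  qed
  then have "(LINT x|lborel. \<bar>F x\<bar> powr q)
      = enn2real (\<integral>\<^sup>+x. ennreal (norm x powr (- 2 * real CARD('n))) * ennreal (\<bar>G (inversion x)\<bar> powr q) \<partial>lborel)"
    by (simp add: integral_eq_nn_integral ennreal_mult)
  also have "\<dots> = enn2real (\<integral>\<^sup>+y. ennreal (\<bar>G y\<bar> powr q) \<partial>lborel)"
    by (subst nn_integral_inversion[where g = "\<lambda>y. ennreal (\<bar>G y\<bar> powr q)"]) simp_all
  also have "\<dots> = (LINT y|lborel. \<bar>G y\<bar> powr q)"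
    by (simp add: integral_eq_nn_integral)
  finally show ?thesis
    using real by (simp add: Lp_norm_def)
qed (use p in simp)

lemma borel_measurable_differentiable:
  "(\<And>x. f differentiable (at x)) \<Longrightarrow> (f :: real^'n \<Rightarrow> real) \<in> borel_measurable borel"
  by (intro borel_measurable_continuous_onI differentiable_imp_continuous_on)
    (simp add: differentiable_on_def differentiable_at_withinI)

lemma borel_measurable_laplacian:
  "smooth u \<Longrightarrow> laplacian u \<in> borel_measurable borel"
  unfolding laplacian_def[abs_def]
  by (intro borel_measurable_differentiable differentiable_sum ballI smooth_second_partials) auto

lemma powr_norm_inversion: "x \<noteq> 0 \<Longrightarrow> norm (inversion x) powr a = norm x powr (- a)"
  by (simp add: norm_inversion powr_minus_divide powr_divide)

lemma Lp_norms_kelvin: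
  fixes u :: "real^'n \<Rightarrow> real"
  assumes p: "1 \<le> p" and \<beta>: "\<beta> = 2 - \<alpha> + real CARD('n) * (1 - real_of_ereal (2 / p))"
    and u: "test_fun u"
  shows "Lp_norm p (\<lambda>x. norm x powr \<beta> * laplacian (kelvin u) x) = Lp_norm p (\<lambda>x. norm x powr \<alpha> * laplacian u x)"
    and "Lp_norm p (\<lambda>x. norm x powr (\<beta> - 2) * kelvin u x) = Lp_norm p (\<lambda>x. norm x powr (\<alpha> - 2) * u x)"
proof -
  have smooth_u: "smooth u"
    using u by (simp add: test_fun_def)
  define e where "e = - real CARD('n) * real_of_ereal (2 / p)"
  have powr_split: "norm x powr c * norm x powr d = norm x powr e * norm (inversion x) powr \<gamma>"
    if "x \<noteq> 0" "c + d = e - \<gamma>" for c d \<gamma> and x :: "real^'n"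
    using that by (simp add: powr_norm_inversion powr_add[symmetric])
  show "Lp_norm p (\<lambda>x. norm x powr \<beta> * laplacian (kelvin u) x) = Lp_norm p (\<lambda>x. norm x powr \<alpha> * laplacian u x)"
  proof (rule Lp_norm_inversion[OF p])
    show "(\<lambda>x. norm x powr \<alpha> * laplacian u x) \<in> borel_measurable borel"
      using borel_measurable_laplacian[OF smooth_u] by measurable
    fix x :: "real^'n"
    show "norm x powr \<beta> * laplacian (kelvin u) x
        = norm x powr (- real CARD('n) * real_of_ereal (2 / p)) * (norm (inversion x) powr \<alpha> * laplacian u (inversion x))"
    proof (cases "x = 0")
      case False
      then have "norm x powr \<beta> * laplacian (kelvin u) x
          = (norm x powr \<beta> * norm x powr (-2 - real CARD('n))) * laplacian u (inversion x)"
        by (simp add: laplacian_kelvin[OF smooth_u])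
      also have "norm x powr \<beta> * norm x powr (-2 - real CARD('n)) = norm x powr e * norm (inversion x) powr \<alpha>"
        using False \<beta> by (intro powr_split) (auto simp: e_def algebra_simps)
      finally show ?thesis by (simp add: e_def)
    qed simp
  qed simp
  show "Lp_norm p (\<lambda>x. norm x powr (\<beta> - 2) * kelvin u x) = Lp_norm p (\<lambda>x. norm x powr (\<alpha> - 2) * u x)"
  proof (rule Lp_norm_inversion[OF p])
    show "(\<lambda>x. norm x powr (\<alpha> - 2) * u x) \<in> borel_measurable borel"
      using borel_measurable_differentiable[OF smooth_differentiable[OF smooth_u]] by measurable
    fix x :: "real^'n"
    show "norm x powr (\<beta> - 2) * kelvin u x
        = norm x powr (- real CARD('n) * real_of_ereal (2 / p)) * (norm (inversion x) powr (\<alpha> - 2) * u (inversion x))"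
    proof (cases "x = 0")
      case False
      have "norm x powr (\<beta> - 2) * kelvin u x
          = (norm x powr (\<beta> - 2) * norm x powr (2 - real CARD('n))) * u (inversion x)"
        by (simp add: kelvin_def)
      also have "norm x powr (\<beta> - 2) * norm x powr (2 - real CARD('n)) = norm x powr e * norm (inversion x) powr (\<alpha> - 2)"
        using False \<beta> by (intro powr_split) (auto simp: e_def algebra_simps)
      finally show ?thesis by (simp add: e_def)
    qed simp
  qed simp
qed

lemma rellich_ineq_kelvin_transfer:
  fixes p :: ereal and \<alpha> \<beta> C :: real
  assumes p: "1 \<le> p" and \<beta>: "\<beta> = 2 - \<alpha> + real CARD('n) * (1 - real_of_ereal (2 / p))"
    and "rellich_ineq TYPE('n::finite) p \<alpha> C"
  shows "rellich_ineq TYPE('n) p \<beta> C"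
  unfolding rellich_ineq_def
proof (intro allI impI)
  fix v :: "real^'n \<Rightarrow> real"
  assume v: "test_fun v"
  then have "test_fun (kelvin v)" and v_eq: "v = kelvin (kelvin v)"
    by (simp_all add: test_fun_kelvin kelvin_kelvin test_fun_at_0)
  then show "Lp_norm p (\<lambda>x. norm x powr \<beta> * laplacian v x) \<ge> C * Lp_norm p (\<lambda>x. norm x powr (\<beta> - 2) * v x)"
    using assms(3) Lp_norms_kelvin[OF p \<beta>, of "kelvin v"] by (simp add: rellich_ineq_def)
qed

theorem mainTheorem4:
  fixes p :: ereal and \<alpha> \<beta> :: real
  assumes "CARD('n::finite) \<ge> 3"
    and "1 \<le> p"
    and "\<beta> = 2 - \<alpha> + real CARD('n) * (1 - real_of_ereal (2 / p))"
  shows "((\<exists>C>0. rellich_ineq TYPE('n) p \<alpha> C) \<longleftrightarrow> (\<exists>C>0. rellich_ineq TYPE('n) p \<beta> C))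
       \<and> best_const TYPE('n) p \<alpha> = best_const TYPE('n) p \<beta>"
proof -
  have "\<alpha> = 2 - \<beta> + real CARD('n) * (1 - real_of_ereal (2 / p))"
    using assms(3) by simp
  then have "rellich_ineq TYPE('n) p \<alpha> C \<longleftrightarrow> rellich_ineq TYPE('n) p \<beta> C" for C
    using rellich_ineq_kelvin_transfer[OF assms(2)] assms(3) by blast
  then show ?thesis
    by (simp add: best_const_def)
qed

end
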